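(* Let $N^h\ge 2$ be an integer and $h=1/N^h$. Let $\lambda_j=j^2\pi^2$ be the $j$-th exact eigenvalue of $-u''=\lambda u$ on $(0,1)$ with $u(0)=u(1)=0$, and let $\lambda^h_{gs,j}$ be the $j$-th approximate eigenvalue (eigenvalues sorted in nondecreasing order, counting multiplicity) of the linear GSFEM generalized matrix eigenvalue problem $(\mathbf{K}-\eta_K\mathbf{S})\mathbf{U}=\lambda^h(\mathbf{M}+\eta_M\mathbf{S}_g)\mathbf{U}$ described in the context, with $\eta_K=\frac{1}{12}$ and $\eta_M=\frac{1}{360}$. Then \[ \frac{|\lambda^h_{gs,j}-\lambda_j|}{\lambda_j}<\frac{1}{3024}(j\pi h)^6\qquad\text{for all } j\in\{1,\dots,N^h-1\}. \]
   Context: Setting (linear finite elements, generalized SoftFEM, in 1D): Let $x_k=kh$, $k=0,\dots,N^h$, be a uniform mesh of $[0,1]$. Let $V^h$ be the space of continuous functions on $[0,1]$ that are affine on each $[x_{k-1},x_k]$ and vanish at $0$ and $1$, with hat basis $\phi_k$, $k=1,\dots,N^h-1$, $\phi_k(x_l)=\delta_{kl}$. For $v\in V^h$ and an interior node $x_k$ let $[\![v']\!](x_k)=v'(x_k^-)-v'(x_k^+)$. Define $a(v,w)=\int_0^1 v'w'\,dx$, $b(v,w)=\int_0^1 vw\,dx$, $s(v,w)=\sum_{k=1}^{N^h-1} h\,[\![v']\!](x_k)[\![w']\!](x_k)$, $s_g(v,w)=\sum_{k=1}^{N^h-1} h^3\,[\![v']\!](x_k)[\![w']\!](x_k)$, and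 the matrices $\mathbf{K}_{kl}=a(\phi_l,\phi_k)$, $\mathbf{M}_{kl}=b(\phi_l,\phi_k)$, $\mathbf{S}_{kl}=s(\phi_l,\phi_k)$, $(\mathbf{S}_g)_{kl}=s_g(\phi_l,\phi_k)$. Explicitly, $\mathbf{K}=\frac1h\,\mathrm{tridiag}(-1,2,-1)$, $\mathbf{M}=h\,\mathrm{tridiag}(\tfrac16,\tfrac23,\tfrac16)$, $\mathbf{S}=\frac1h$ times the symmetric pentadiagonal matrix with rows $(1,-4,6,-4,1)$ except that the first and last diagonal entries are $5$, and $\mathbf{S}_g=h^2\mathbf{S}$; all are $(N^h-1)\times(N^h-1)$. *)

theory Defs
  imports Complex_Main "Jordan_Normal_Form.Determinant" "HOL-Computational_Algebra.Polynomial"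
    "HOL-Library.Multiset"
begin

text \<open>Uniform mesh with N cells, h = 1/N, interior nodes x_1..x_(N-1).
  Matrices are (N-1)x(N-1); matrix row/column index i (0-based) corresponds to node i+1.\<close>

definition mesh_h :: "nat \<Rightarrow> real" where
  "mesh_h N = 1 / real N"

definition stiff_mat :: "nat \<Rightarrow> real mat" where
  "stiff_mat N = mat (N - 1) (N - 1) (\<lambda>(i, j).
     (1 / mesh_h N) * (if i = j then 2 else if i = j + 1 \<or> j = i + 1 then -1 else 0))"

definition mass_mat :: "nat \<Rightarrow> real mat" where
  "mass_mat N = mat (N - 1) (N - 1) (\<lambda>(i, j).
     mesh_h N * (if i = j then 2/3 else if i = j + 1 \<or> j = i + 1 then 1/6 else 0))"

text \<open>Jump of the derivative of the hat function phi_k at the node x_m: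
  [[phi_k']](x_m) = phi_k'(x_m^-) - phi_k'(x_m^+).\<close>
definition hat_jump :: "nat \<Rightarrow> nat \<Rightarrow> nat \<Rightarrow> real" where
  "hat_jump N k m = (if m = k then 2 / mesh_h N
                     else if m + 1 = k \<or> k + 1 = m then - 1 / mesh_h N else 0)"

definition jump_mat :: "nat \<Rightarrow> real mat" where
  "jump_mat N = mat (N - 1) (N - 1) (\<lambda>(i, j).
     (\<Sum>m = 1..N - 1. mesh_h N * hat_jump N (j + 1) m * hat_jump N (i + 1) m))"

text \<open>S_g = h^2 S (the h^3-weighted jump form).\<close>
definition jump_mat_g :: "nat \<Rightarrow> real mat" where
  "jump_mat_g N = (mesh_h N)\<^sup>2 \<cdot>\<^sub>m jump_mat N"

definition gen_char_poly :: "real mat \<Rightarrow> real mat \<Rightarrow> real poly" where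
  "gen_char_poly A B = det (mat (dim_row A) (dim_col A) (\<lambda>ij. [: A $$ ij, - (B $$ ij) :]))"

text \<open>j-th (1-based) generalized eigenvalue, sorted nondecreasingly, counted with multiplicity.\<close>
definition gen_eig :: "real mat \<Rightarrow> real mat \<Rightarrow> nat \<Rightarrow> real" where
  "gen_eig A B j = sorted_list_of_multiset (proots (gen_char_poly A B)) ! (j - 1)"

definition gsfem_eig :: "nat \<Rightarrow> real \<Rightarrow> real \<Rightarrow> nat \<Rightarrow> real" where
  "gsfem_eig N etaK etaM j =
     gen_eig (stiff_mat N - etaK \<cdot>\<^sub>m jump_mat N) (mass_mat N + etaM \<cdot>\<^sub>m jump_mat_g N) j"

end

theory Submission
  imports Defs
begin

(* The stiffness, mass and jump matrices are all polynomials in T = tridiag(-1, 2, -1):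
   K = T / h, M = h (I - T / 6), S = T^2 / h and S_g = h^2 S.  Hence the discrete sine vectors
   (sin (k theta_c))_k with theta_c = c pi h, on which T acts by mu_c = 2 - 2 cos theta_c,
   diagonalize the whole pencil, and its eigenvalues are F(mu_c) / h^2 with
   F(mu) = (mu - mu^2/12) / (1 - mu/6 + mu^2/360).  Both mu_c and F are increasing, so the j-th
   eigenvalue belongs to theta_j = j pi h =: t < pi, and the claim becomes
   t^2 - t^8/3024 < F(2 - 2 cos t) < t^2.  Enclosing 2 - 2 cos t between its Maclaurin polynomials
   in t^2 reduces both inequalities to the positivity of two explicit polynomials on [0, 10]
   (as pi^2 < 10), which is certified by interval evaluation of Horner's scheme. *)

section \<open>Pencils diagonalized by a common basis\<close>

lemma det_mat_diag: "det (mat_diag n d) = (\<Prod>i = 0..<n. d i)"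
proof -
  have "det (mat_diag n d) = prod_list (diag_mat (mat_diag n d))"
    by (rule det_upper_triangular) (auto simp: upper_triangular_def mat_diag_def)
  also have "\<dots> = (\<Prod>i = 0..<n. d i)"
    by (simp add: prod_list_diag_prod mat_diag_def)
  finally show ?thesis .
qed

lemma det_eq_prod_if_diagonalized:
  fixes A Q :: "'a :: idom mat"
  assumes A: "A \<in> carrier_mat n n" and Q: "Q \<in> carrier_mat n n" and "det Q \<noteq> 0"
    and AQ: "A * Q = Q * mat_diag n d"
  shows "det A = (\<Prod>i = 0..<n. d i)"
proof -
  have "det A * det Q = det (Q * mat_diag n d)"
    using det_mult[OF A Q] by (simp add: AQ)
  also have "\<dots> = det Q * (\<Prod>i = 0..<n. d i)"
    using det_mult[OF Q mat_diag_dim] by (simp add: det_mat_diag)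
  finally show ?thesis
    using \<open>det Q \<noteq> 0\<close> by (metis mult.commute mult_cancel_left)
qed

lemma smult_mat_diag: "(c :: 'a :: semiring_0) \<cdot>\<^sub>m mat_diag n f = mat_diag n (\<lambda>i. c * f i)"
  by (rule eq_matI) (auto simp: mat_diag_def)

lemma add_mat_diag: "mat_diag n (f :: nat \<Rightarrow> 'a :: monoid_add) + mat_diag n g = mat_diag n (\<lambda>i. f i + g i)"
  by (rule eq_matI) (auto simp: mat_diag_def)

lemma minus_mat_diag: "mat_diag n (f :: nat \<Rightarrow> 'a :: group_add) - mat_diag n g = mat_diag n (\<lambda>i. f i - g i)"
  by (rule eq_matI) (auto simp: mat_diag_def)

lemma mat_diag_cong: "(\<And>i. i < n \<Longrightarrow> f i = g i) \<Longrightarrow> mat_diag n f = mat_diag n g"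
  by (rule eq_matI) (auto simp: mat_diag_def)

lemma transpose_mat_diag: "transpose_mat (mat_diag n f) = mat_diag n f"
  by (rule eq_matI) (auto simp: mat_diag_def)

lemma smult_mult_mat_diag:
  fixes X Q :: "'a :: comm_ring_1 mat"
  assumes X: "X \<in> carrier_mat n n" and Q: "Q \<in> carrier_mat n n"
    and XQ: "X * Q = Q * mat_diag n f"
  shows "(c \<cdot>\<^sub>m X) * Q = Q * mat_diag n (\<lambda>i. c * f i)"
proof -
  have "(c \<cdot>\<^sub>m X) * Q = c \<cdot>\<^sub>m (Q * mat_diag n f)"
    using X Q by (simp add: mult_smult_assoc_mat XQ)
  also have "\<dots> = Q * (c \<cdot>\<^sub>m mat_diag n f)"
    by (rule mult_smult_distrib[OF Q mat_diag_dim, symmetric])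
  finally show ?thesis
    by (simp only: smult_mat_diag)
qed

lemma mult_mat_diag_combination:
  fixes X Y Q :: "'a :: comm_ring_1 mat"
  assumes X: "X \<in> carrier_mat n n" and Y: "Y \<in> carrier_mat n n" and Q: "Q \<in> carrier_mat n n"
    and XQ: "X * Q = Q * mat_diag n f" and YQ: "Y * Q = Q * mat_diag n g"
  shows "(X + c \<cdot>\<^sub>m Y) * Q = Q * mat_diag n (\<lambda>i. f i + c * g i)"
    and "(X - c \<cdot>\<^sub>m Y) * Q = Q * mat_diag n (\<lambda>i. f i - c * g i)"
proof -
  have cYQ: "(c \<cdot>\<^sub>m Y) * Q = Q * mat_diag n (\<lambda>i. c * g i)"
    by (rule smult_mult_mat_diag[OF Y Q YQ])
  show "(X + c \<cdot>\<^sub>m Y) * Q = Q * mat_diag n (\<lambda>i. f i + c * g i)"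
    using X Y Q by (simp add: add_mult_distrib_mat[of _ n n] XQ cYQ
        mult_add_distrib_mat[OF Q mat_diag_dim mat_diag_dim, symmetric] add_mat_diag)
  show "(X - c \<cdot>\<^sub>m Y) * Q = Q * mat_diag n (\<lambda>i. f i - c * g i)"
    using X Y Q by (simp add: minus_mult_distrib_mat[of _ n n] XQ cYQ
        mult_minus_distrib_mat[OF Q mat_diag_dim mat_diag_dim, symmetric] minus_mat_diag)
qed

lemma commute_mat_diag_off_diag_zero:
  fixes G :: "'a :: idom mat"
  assumes G: "G \<in> carrier_mat n n" and commute: "G * mat_diag n d = mat_diag n d * G"
    and "i < n" "k < n" "d i \<noteq> d k"
  shows "G $$ (i, k) = 0"
proof -
  have "G $$ (i, k) * d k = d i * G $$ (i, k)"
    using arg_cong[OF commute, of "\<lambda>A. A $$ (i, k)"] G assms(3,4)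
    by (simp add: mat_diag_mult_left[OF G] mat_diag_mult_right[OF G])
  then have "G $$ (i, k) * (d k - d i) = 0"
    by (simp add: algebra_simps)
  with \<open>d i \<noteq> d k\<close> show ?thesis
    by simp
qed

lemma poly_gen_char_poly:
  assumes "B \<in> carrier_mat (dim_row A) (dim_col A)"
  shows "poly (gen_char_poly A B) x = det (A - x \<cdot>\<^sub>m B)"
proof -
  interpret comm_ring_hom "\<lambda>p :: real poly. poly p x" by unfold_locales auto
  have "map_mat (\<lambda>p. poly p x) (mat (dim_row A) (dim_col A) (\<lambda>ij. [:A $$ ij, - (B $$ ij):]))
      = A - x \<cdot>\<^sub>m B"
    using assms by (intro eq_matI) auto
  then show ?thesis
    unfolding gen_char_poly_def by (metis hom_det)
qed

lemma gen_char_poly_diagonalized: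
  fixes A B Q :: "real mat"
  assumes A: "A \<in> carrier_mat n n" and B: "B \<in> carrier_mat n n" and Q: "Q \<in> carrier_mat n n"
    and "det Q \<noteq> 0" and AQ: "A * Q = Q * mat_diag n a" and BQ: "B * Q = Q * mat_diag n b"
  shows "gen_char_poly A B = (\<Prod>i = 0..<n. [:a i, - b i:])"
proof (rule poly_ext)
  fix x
  have "(A - x \<cdot>\<^sub>m B) * Q = Q * mat_diag n (\<lambda>i. a i - x * b i)"
    by (rule mult_mat_diag_combination(2)[OF A B Q AQ BQ])
  then have "det (A - x \<cdot>\<^sub>m B) = (\<Prod>i = 0..<n. a i - x * b i)"
    using A B Q \<open>det Q \<noteq> 0\<close> by (intro det_eq_prod_if_diagonalized) auto
  then show "poly (gen_char_poly A B) x = poly (\<Prod>i = 0..<n. [:a i, - b i:]) x"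
    using A B by (simp add: poly_gen_char_poly poly_prod)
qed

lemma proots_linear:
  fixes a b :: real
  assumes "b \<noteq> 0"
  shows "proots [:a, - b:] = {#a / b#}"
proof -
  have "[:a, - b:] = smult (- b) [:- (a / b), 1:]"
    using assms by simp
  then have "proots [:a, - b:] = proots (smult (- b) [:- (a / b), 1:])"
    by (rule arg_cong)
  also have "\<dots> = proots [:- (a / b), 1:]"
    by (rule proots_smult) (use assms in simp)
  finally show ?thesis
    by simp
qed

lemma proots_prod_linear:
  assumes "\<And>i. i < n \<Longrightarrow> b i \<noteq> (0 :: real)"
  shows "proots (\<Prod>i = 0..<n. [:a i, - b i:]) = mset (map (\<lambda>i. a i / b i) [0..<n])"
proof -
  have "proots (\<Prod>i = 0..<n. [:a i, - b i:]) = (\<Sum>i = 0..<n. proots [:a i, - b i:])"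
    by (rule proots_prod) (use assms in auto)
  also have "\<dots> = (\<Sum>i = 0..<n. {#a i / b i#})"
    using assms by (intro sum.cong) (auto simp: proots_linear)
  also have "\<dots> = mset (map (\<lambda>i. a i / b i) [0..<n])"
    by (induction n) (auto simp: add.commute)
  finally show ?thesis .
qed

lemma gen_eig_diagonalized:
  fixes A B Q :: "real mat"
  assumes "A \<in> carrier_mat n n" and "B \<in> carrier_mat n n" and "Q \<in> carrier_mat n n"
    and "det Q \<noteq> 0" and "A * Q = Q * mat_diag n a" and "B * Q = Q * mat_diag n b"
    and b: "\<And>i. i < n \<Longrightarrow> b i \<noteq> 0" and sorted: "sorted (map (\<lambda>i. a i / b i) [0..<n])"
    and j: "1 \<le> j" "j \<le> n"
  shows "gen_eig A B j = a (j - 1) / b (j - 1)"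
proof -
  have "proots (gen_char_poly A B) = mset (map (\<lambda>i. a i / b i) [0..<n])"
    unfolding gen_char_poly_diagonalized[OF assms(1-6)] using b by (rule proots_prod_linear)
  then have "sorted_list_of_multiset (proots (gen_char_poly A B)) = map (\<lambda>i. a i / b i) [0..<n]"
    using sorted by (simp only: sorted_list_of_multiset_mset sorted_sort_id)
  moreover have "j - 1 < n"
    using j by simp
  ultimately show ?thesis
    by (simp add: gen_eig_def)
qed

section \<open>Tridiagonal matrices and the discrete sine basis\<close>

definition tridiag_mat :: "nat \<Rightarrow> real \<Rightarrow> real \<Rightarrow> real mat" where
  "tridiag_mat n \<alpha> \<beta> =
     mat n n (\<lambda>(i, k). if i = k then \<alpha> else if i = k + 1 \<or> k = i + 1 then \<beta> else 0)"

definition sine_angle :: "nat \<Rightarrow> nat \<Rightarrow> real" where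
  "sine_angle n c = real (Suc c) * pi / real (Suc n)"

definition sine_mat :: "nat \<Rightarrow> real mat" where
  "sine_mat n = mat n n (\<lambda>(k, c). sin (real (Suc k) * sine_angle n c))"

definition lap_eig :: "nat \<Rightarrow> nat \<Rightarrow> real" where
  "lap_eig n c = 2 - 2 * cos (sine_angle n c)"

lemma dim_tridiag_mat [simp]:
  "dim_row (tridiag_mat n \<alpha> \<beta>) = n" "dim_col (tridiag_mat n \<alpha> \<beta>) = n"
  by (simp_all add: tridiag_mat_def)

lemma dim_sine_mat [simp]: "dim_row (sine_mat n) = n" "dim_col (sine_mat n) = n"
  by (simp_all add: sine_mat_def)

lemma tridiag_mat_carrier: "tridiag_mat n \<alpha> \<beta> \<in> carrier_mat n n"
  by (simp add: carrier_matI)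

lemma sine_mat_carrier [simp]: "sine_mat n \<in> carrier_mat n n"
  by (simp add: carrier_matI)

lemma transpose_tridiag_mat [simp]: "transpose_mat (tridiag_mat n \<alpha> \<beta>) = tridiag_mat n \<alpha> \<beta>"
  by (rule eq_matI) (auto simp: tridiag_mat_def)

lemma tridiag_mat_row_sum:
  fixes v :: "nat \<Rightarrow> real"
  assumes i: "i < n" and "v 0 = 0" and "v (Suc n) = 0"
  shows "(\<Sum>k = 0..<n. tridiag_mat n \<alpha> \<beta> $$ (i, k) * v (Suc k))
       = \<alpha> * v (Suc i) + \<beta> * v i + \<beta> * v (i + 2)"
proof -
  have split: "tridiag_mat n \<alpha> \<beta> $$ (i, k) * v (Suc k) =
      (if k = i then \<alpha> * v (Suc k) else 0) + (if k + 1 = i then \<beta> * v (Suc k) else 0)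
      + (if k = i + 1 then \<beta> * v (Suc k) else 0)" if "k < n" for k
    using i that by (auto simp: tridiag_mat_def)
  have left: "(\<Sum>k = 0..<n. if k + 1 = i then \<beta> * v (Suc k) else 0) = \<beta> * v i"
  proof (cases i)
    case (Suc i')
    then have "(\<Sum>k = 0..<n. if k + 1 = i then \<beta> * v (Suc k) else 0)
        = (\<Sum>k = 0..<n. if k = i' then \<beta> * v (Suc k) else 0)"
      by (intro sum.cong) auto
    then show ?thesis
      using i Suc by simp
  qed (simp add: \<open>v 0 = 0\<close>)
  have right: "(\<Sum>k = 0..<n. if k = i + 1 then \<beta> * v (Suc k) else 0) = \<beta> * v (i + 2)"
  proof (cases "i + 1 < n")
    case False
    then have "i + 2 = Suc n"
      using i by simp
    then show ?thesis
      using False \<open>v (Suc n) = 0\<close> by simp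
  qed simp
  have "(\<Sum>k = 0..<n. tridiag_mat n \<alpha> \<beta> $$ (i, k) * v (Suc k))
      = (\<Sum>k = 0..<n. (if k = i then \<alpha> * v (Suc k) else 0)
          + (if k + 1 = i then \<beta> * v (Suc k) else 0) + (if k = i + 1 then \<beta> * v (Suc k) else 0))"
    by (intro sum.cong refl) (simp add: split)
  also have "\<dots> = \<alpha> * v (Suc i) + \<beta> * v i + \<beta> * v (i + 2)"
    unfolding sum.distrib left right using i by simp
  finally show ?thesis .
qed

lemma tridiag_mat_sine_row:
  assumes i: "i < n" and boundary: "sin (real (Suc n) * \<theta>) = 0"
  shows "(\<Sum>k = 0..<n. tridiag_mat n \<alpha> \<beta> $$ (i, k) * sin (real (Suc k) * \<theta>))
       = (\<alpha> + 2 * \<beta> * cos \<theta>) * sin (real (Suc i) * \<theta>)"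
proof -
  define s where "s k = sin (real k * \<theta>)" for k :: nat
  have recurrence: "s i + s (i + 2) = 2 * cos \<theta> * s (Suc i)"
    using sin_times_cos[of "real (Suc i) * \<theta>" \<theta>] by (simp add: s_def algebra_simps)
  have "(\<Sum>k = 0..<n. tridiag_mat n \<alpha> \<beta> $$ (i, k) * s (Suc k))
      = \<alpha> * s (Suc i) + \<beta> * s i + \<beta> * s (i + 2)"
    using i boundary by (intro tridiag_mat_row_sum) (simp_all add: s_def)
  also have "\<dots> = \<alpha> * s (Suc i) + \<beta> * (s i + s (i + 2))"
    by (simp add: algebra_simps)
  also have "\<dots> = (\<alpha> + 2 * \<beta> * cos \<theta>) * s (Suc i)"
    unfolding recurrence by (simp add: algebra_simps)
  finally show ?thesis
    by (simp add: s_def)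
qed

lemma tridiag_mult_sine_mat:
  "tridiag_mat n \<alpha> \<beta> * sine_mat n = sine_mat n * mat_diag n (\<lambda>c. \<alpha> + 2 * \<beta> * cos (sine_angle n c))"
proof (rule eq_matI)
  fix i c
  assume "i < dim_row (sine_mat n * mat_diag n (\<lambda>c. \<alpha> + 2 * \<beta> * cos (sine_angle n c)))"
    and "c < dim_col (sine_mat n * mat_diag n (\<lambda>c. \<alpha> + 2 * \<beta> * cos (sine_angle n c)))"
  then have i: "i < n" and c: "c < n"
    by (simp_all add: mat_diag_def)
  have boundary: "sin (real (Suc n) * sine_angle n c) = 0"
    using sin_npi[of "Suc c"] by (simp add: sine_angle_def)
  have "(tridiag_mat n \<alpha> \<beta> * sine_mat n) $$ (i, c)
      = (\<Sum>k = 0..<n. tridiag_mat n \<alpha> \<beta> $$ (i, k) * sin (real (Suc k) * sine_angle n c))"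
    using i c by (simp add: scalar_prod_def sine_mat_def)
  also have "\<dots> = (\<alpha> + 2 * \<beta> * cos (sine_angle n c)) * sin (real (Suc i) * sine_angle n c)"
    by (rule tridiag_mat_sine_row[OF i boundary])
  also have "\<dots> = (sine_mat n * mat_diag n (\<lambda>c. \<alpha> + 2 * \<beta> * cos (sine_angle n c))) $$ (i, c)"
    using i c by (simp add: mat_diag_mult_right[of _ n] sine_mat_def mult.commute)
  finally show "(tridiag_mat n \<alpha> \<beta> * sine_mat n) $$ (i, c)
      = (sine_mat n * mat_diag n (\<lambda>c. \<alpha> + 2 * \<beta> * cos (sine_angle n c))) $$ (i, c)" .
qed (simp_all add: mat_diag_def)

lemma lap_mult_sine_mat: "tridiag_mat n 2 (-1) * sine_mat n = sine_mat n * mat_diag n (lap_eig n)"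
  using tridiag_mult_sine_mat[of n 2 "-1"] by (simp add: lap_eig_def[abs_def])

lemma lap_square_mult_sine_mat:
  "tridiag_mat n 2 (-1) * tridiag_mat n 2 (-1) * sine_mat n
     = sine_mat n * mat_diag n (\<lambda>c. (lap_eig n c)\<^sup>2)"
proof -
  define T D where "T = tridiag_mat n 2 (-1)" and "D = mat_diag n (lap_eig n)"
  have T: "T \<in> carrier_mat n n" and D: "D \<in> carrier_mat n n" and TQ: "T * sine_mat n = sine_mat n * D"
    by (simp_all add: T_def D_def tridiag_mat_carrier lap_mult_sine_mat)
  have "T * T * sine_mat n = T * (sine_mat n * D)"
    using assoc_mult_mat[OF T T sine_mat_carrier] by (simp add: TQ)
  also have "\<dots> = sine_mat n * (D * D)"
    using assoc_mult_mat[OF T sine_mat_carrier D] assoc_mult_mat[OF sine_mat_carrier D D]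
    by (simp add: TQ)
  finally show ?thesis
    by (simp add: T_def D_def power2_eq_square)
qed

lemma sine_angle_pos: "0 < sine_angle n c"
  by (simp add: sine_angle_def)

lemma sine_angle_less_pi: "c < n \<Longrightarrow> sine_angle n c < pi"
  by (simp add: sine_angle_def divide_less_eq)

lemma lap_eig_bounds: "0 \<le> lap_eig n c" "lap_eig n c \<le> 4"
  unfolding lap_eig_def using cos_le_one[of "sine_angle n c"] cos_ge_minus_one[of "sine_angle n c"]
  by linarith+

lemma lap_eig_strict_mono:
  assumes "c < d" and "d < n"
  shows "lap_eig n c < lap_eig n d"
proof -
  have "sine_angle n c < sine_angle n d"
    using assms by (simp add: sine_angle_def divide_strict_right_mono)
  then have "cos (sine_angle n d) < cos (sine_angle n c)"
    using assms sine_angle_pos[of n c] sine_angle_less_pi[of d n]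
    by (intro cos_monotone_0_pi) auto
  then show ?thesis
    by (simp add: lap_eig_def)
qed

lemma sine_mat_gram_diag_pos:
  assumes "c < n"
  shows "0 < (transpose_mat (sine_mat n) * sine_mat n) $$ (c, c)"
proof -
  have "0 < sin (sine_angle n c) * sin (sine_angle n c)"
    using assms sine_angle_pos[of n c] sine_angle_less_pi[of c n] by (simp add: sin_gt_zero)
  also have "\<dots> \<le> (\<Sum>k = 0..<n. sine_mat n $$ (k, c) * sine_mat n $$ (k, c))"
    using member_le_sum[of 0 "{0..<n}" "\<lambda>k. sine_mat n $$ (k, c) * sine_mat n $$ (k, c)"] assms
    by (simp add: sine_mat_def)
  also have "\<dots> = (transpose_mat (sine_mat n) * sine_mat n) $$ (c, c)"
    using assms by (simp add: scalar_prod_def)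
  finally show ?thesis .
qed

text \<open>The columns are eigenvectors of the symmetric matrix \<open>tridiag_mat n 2 (-1)\<close> for pairwise
  distinct eigenvalues, so their Gram matrix commutes with the eigenvalue matrix and is
  therefore diagonal, with positive diagonal.\<close>
lemma det_sine_mat_nonzero: "det (sine_mat n) \<noteq> 0"
proof -
  define Q T D where "Q = sine_mat n" and "T = tridiag_mat n 2 (-1)" and "D = mat_diag n (lap_eig n)"
  define G where "G = transpose_mat Q * Q"
  have carriers: "Q \<in> carrier_mat n n" "T \<in> carrier_mat n n" "D \<in> carrier_mat n n"
    "G \<in> carrier_mat n n"
    by (simp_all add: Q_def T_def D_def G_def carrier_matI)
  have TQ: "T * Q = Q * D"
    by (simp add: Q_def T_def D_def lap_mult_sine_mat)
  have "transpose_mat Q * T = transpose_mat (T * Q)"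
    using transpose_mult[OF carriers(2,1)] by (simp add: T_def)
  also have "\<dots> = D * transpose_mat Q"
    using transpose_mult[OF carriers(1,3)] by (simp add: TQ D_def transpose_mat_diag)
  finally have QtT: "transpose_mat Q * T = D * transpose_mat Q" .
  have "G * D = transpose_mat Q * (Q * D)"
    using carriers by (simp add: G_def)
  also have "\<dots> = (transpose_mat Q * T) * Q"
    using carriers by (simp add: TQ)
  also have "\<dots> = D * G"
    using carriers by (simp add: QtT G_def)
  finally have commute: "G * D = D * G" .
  have "G $$ (i, k) = 0" if "i < n" "k < i" for i k
    using that lap_eig_strict_mono[of k i n]
    by (intro commute_mat_diag_off_diag_zero[OF carriers(4) commute[unfolded D_def]]) auto
  then have "det G = (\<Prod>c = 0..<n. G $$ (c, c))"
    using carriers by (simp add: det_upper_triangular upper_triangular_def prod_list_diag_prod)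
  also have "\<dots> > 0"
    using sine_mat_gram_diag_pos[of _ n] by (intro prod_pos) (simp add: G_def Q_def)
  finally have "0 < det G" .
  moreover have "det G = det Q * det Q"
    using carriers by (simp add: G_def det_mult[of _ n] det_transpose)
  ultimately show ?thesis
    by (auto simp: Q_def)
qed

section \<open>The GSFEM pencil\<close>

lemma stiff_mat_eq_tridiag: "stiff_mat N = (1 / mesh_h N) \<cdot>\<^sub>m tridiag_mat (N - 1) 2 (-1)"
  by (rule eq_matI) (auto simp: stiff_mat_def tridiag_mat_def)

lemma mass_mat_eq_tridiag: "mass_mat N = tridiag_mat (N - 1) (2/3 * mesh_h N) (mesh_h N / 6)"
  by (rule eq_matI) (auto simp: mass_mat_def tridiag_mat_def)

lemma jump_mat_eq_tridiag_square:
  "jump_mat N = (1 / mesh_h N) \<cdot>\<^sub>m (tridiag_mat (N - 1) 2 (-1) * tridiag_mat (N - 1) 2 (-1))"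
proof (rule eq_matI)
  fix i k
  assume "i < dim_row ((1 / mesh_h N) \<cdot>\<^sub>m (tridiag_mat (N - 1) 2 (-1) * tridiag_mat (N - 1) 2 (-1)))"
    and "k < dim_col ((1 / mesh_h N) \<cdot>\<^sub>m (tridiag_mat (N - 1) 2 (-1) * tridiag_mat (N - 1) 2 (-1)))"
  then have i: "i < N - 1" and k: "k < N - 1"
    by simp_all
  define h T where "h = mesh_h N" and "T = tridiag_mat (N - 1) 2 (-1)"
  have "h \<noteq> 0"
    using i by (simp add: h_def mesh_h_def)
  have hat_jump_col: "hat_jump N (Suc k) (Suc m) = T $$ (m, k) / h"
    and hat_jump_row: "hat_jump N (Suc i) (Suc m) = T $$ (i, m) / h" if "m < N - 1" for m
    using that i k by (auto simp: hat_jump_def T_def tridiag_mat_def h_def)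
  have "jump_mat N $$ (i, k) = (\<Sum>m < N - 1. h * hat_jump N (Suc k) (Suc m) * hat_jump N (Suc i) (Suc m))"
    using i k sum.atLeast1_atMost_eq[of "\<lambda>m. h * hat_jump N (Suc k) m * hat_jump N (Suc i) m" "N - 1"]
    by (simp add: jump_mat_def h_def)
  also have "\<dots> = (\<Sum>m = 0..<N - 1. 1 / h * (T $$ (i, m) * T $$ (m, k)))"
    using \<open>h \<noteq> 0\<close> by (simp add: lessThan_atLeast0 hat_jump_col hat_jump_row mult.commute)
  also have "\<dots> = ((1 / h) \<cdot>\<^sub>m (T * T)) $$ (i, k)"
    using i k by (simp add: T_def scalar_prod_def sum_distrib_left)
  finally show "jump_mat N $$ (i, k) = ((1 / mesh_h N) \<cdot>\<^sub>m (tridiag_mat (N - 1) 2 (-1) * tridiag_mat (N - 1) 2 (-1))) $$ (i, k)"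
    by (simp add: h_def T_def)
qed (simp_all add: jump_mat_def)

lemma stiff_mat_mult_sine_mat:
  "stiff_mat N * sine_mat (N - 1) = sine_mat (N - 1) * mat_diag (N - 1) (\<lambda>c. lap_eig (N - 1) c / mesh_h N)"
  using smult_mult_mat_diag[OF tridiag_mat_carrier sine_mat_carrier lap_mult_sine_mat, where c = "1 / mesh_h N"]
  by (simp add: stiff_mat_eq_tridiag)

lemma jump_mat_mult_sine_mat:
  "jump_mat N * sine_mat (N - 1)
     = sine_mat (N - 1) * mat_diag (N - 1) (\<lambda>c. (lap_eig (N - 1) c)\<^sup>2 / mesh_h N)"
  using smult_mult_mat_diag[OF mult_carrier_mat[OF tridiag_mat_carrier tridiag_mat_carrier]
      sine_mat_carrier lap_square_mult_sine_mat, where c = "1 / mesh_h N"]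
  by (simp add: jump_mat_eq_tridiag_square)

lemma mass_mat_mult_sine_mat:
  "mass_mat N * sine_mat (N - 1)
     = sine_mat (N - 1) * mat_diag (N - 1) (\<lambda>c. mesh_h N * (1 - lap_eig (N - 1) c / 6))"
proof -
  have "mass_mat N * sine_mat (N - 1)
      = sine_mat (N - 1) * mat_diag (N - 1) (\<lambda>c. 2/3 * mesh_h N + 2 * (mesh_h N / 6) * cos (sine_angle (N - 1) c))"
    unfolding mass_mat_eq_tridiag by (rule tridiag_mult_sine_mat)
  also have "mat_diag (N - 1) (\<lambda>c. 2/3 * mesh_h N + 2 * (mesh_h N / 6) * cos (sine_angle (N - 1) c))
      = mat_diag (N - 1) (\<lambda>c. mesh_h N * (1 - lap_eig (N - 1) c / 6))"
    by (rule mat_diag_cong) (simp add: lap_eig_def field_simps)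
  finally show ?thesis .
qed

definition gsfem_num :: "real \<Rightarrow> real \<Rightarrow> real" where
  "gsfem_num \<eta>\<^sub>K \<mu> = \<mu> - \<eta>\<^sub>K * \<mu>\<^sup>2"

definition gsfem_den :: "real \<Rightarrow> real \<Rightarrow> real" where
  "gsfem_den \<eta>\<^sub>M \<mu> = 1 - \<mu> / 6 + \<eta>\<^sub>M * \<mu>\<^sup>2"

lemma gsfem_pencil_diagonalized:
  fixes N :: nat
  defines "n \<equiv> N - 1" and "h \<equiv> mesh_h N"
  shows "(stiff_mat N - \<eta>\<^sub>K \<cdot>\<^sub>m jump_mat N) * sine_mat n
      = sine_mat n * mat_diag n (\<lambda>c. gsfem_num \<eta>\<^sub>K (lap_eig n c) / h)"
    and "(mass_mat N + \<eta>\<^sub>M \<cdot>\<^sub>m jump_mat_g N) * sine_mat n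
      = sine_mat n * mat_diag n (\<lambda>c. h * gsfem_den \<eta>\<^sub>M (lap_eig n c))"
proof -
  have carriers: "stiff_mat N \<in> carrier_mat n n" "mass_mat N \<in> carrier_mat n n"
    "jump_mat N \<in> carrier_mat n n" "jump_mat_g N \<in> carrier_mat n n"
    by (simp_all add: carrier_matI n_def stiff_mat_def mass_mat_def jump_mat_def jump_mat_g_def)
  have jump_g: "jump_mat_g N * sine_mat n = sine_mat n * mat_diag n (\<lambda>c. h\<^sup>2 * ((lap_eig n c)\<^sup>2 / h))"
    unfolding jump_mat_g_def h_def
    by (rule smult_mult_mat_diag[OF carriers(3) sine_mat_carrier jump_mat_mult_sine_mat[of N, folded n_def]])
  have "(stiff_mat N - \<eta>\<^sub>K \<cdot>\<^sub>m jump_mat N) * sine_mat n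
      = sine_mat n * mat_diag n (\<lambda>c. lap_eig n c / h - \<eta>\<^sub>K * ((lap_eig n c)\<^sup>2 / h))"
    unfolding h_def by (rule mult_mat_diag_combination(2)[OF carriers(1,3) sine_mat_carrier
        stiff_mat_mult_sine_mat[of N, folded n_def] jump_mat_mult_sine_mat[of N, folded n_def]])
  also have "\<dots> = sine_mat n * mat_diag n (\<lambda>c. gsfem_num \<eta>\<^sub>K (lap_eig n c) / h)"
    by (intro arg_cong[where f = "(*) (sine_mat n)"] mat_diag_cong)
      (simp add: gsfem_num_def diff_divide_distrib)
  finally show "(stiff_mat N - \<eta>\<^sub>K \<cdot>\<^sub>m jump_mat N) * sine_mat n
      = sine_mat n * mat_diag n (\<lambda>c. gsfem_num \<eta>\<^sub>K (lap_eig n c) / h)" .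
  have "(mass_mat N + \<eta>\<^sub>M \<cdot>\<^sub>m jump_mat_g N) * sine_mat n
      = sine_mat n * mat_diag n (\<lambda>c. h * (1 - lap_eig n c / 6) + \<eta>\<^sub>M * (h\<^sup>2 * ((lap_eig n c)\<^sup>2 / h)))"
    by (rule mult_mat_diag_combination(1)[OF carriers(2,4) sine_mat_carrier
        mass_mat_mult_sine_mat[of N, folded n_def h_def] jump_g])
  also have "\<dots> = sine_mat n * mat_diag n (\<lambda>c. h * gsfem_den \<eta>\<^sub>M (lap_eig n c))"
    by (intro arg_cong[where f = "(*) (sine_mat n)"] mat_diag_cong)
      (simp add: gsfem_den_def power2_eq_square algebra_simps)
  finally show "(mass_mat N + \<eta>\<^sub>M \<cdot>\<^sub>m jump_mat_g N) * sine_mat n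
      = sine_mat n * mat_diag n (\<lambda>c. h * gsfem_den \<eta>\<^sub>M (lap_eig n c))" .
qed

lemma gsfem_den_pos: "0 \<le> \<mu> \<Longrightarrow> \<mu> \<le> 4 \<Longrightarrow> 0 < gsfem_den (1/360) \<mu>"
  unfolding gsfem_den_def using zero_le_power2[of \<mu>] by linarith

lemma gsfem_ratio_strict_mono:
  assumes "0 \<le> a" "a < b" "b \<le> 4"
  shows "gsfem_num (1/12) a / gsfem_den (1/360) a < gsfem_num (1/12) b / gsfem_den (1/360) b"
proof -
  have identity: "gsfem_num (1/12) b * gsfem_den (1/360) a - gsfem_num (1/12) a * gsfem_den (1/360) b
      = (b - a) * (1 - (a + b) / 12 + a * b / 90)"
    by (simp add: gsfem_num_def gsfem_den_def power2_eq_square field_simps)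
  have "0 \<le> a * b / 90" and "(a + b) / 12 < 2 / 3"
    using assms by simp_all
  then have "0 < 1 - (a + b) / 12 + a * b / 90"
    by linarith
  then have "0 < (b - a) * (1 - (a + b) / 12 + a * b / 90)"
    using assms by simp
  with identity have "gsfem_num (1/12) a * gsfem_den (1/360) b < gsfem_num (1/12) b * gsfem_den (1/360) a"
    by linarith
  then show ?thesis
    using assms gsfem_den_pos[of a] gsfem_den_pos[of b] by (simp add: field_simps)
qed

lemma gsfem_eig_eq:
  assumes "N \<ge> 2" and "1 \<le> j" "j \<le> N - 1"
  defines "\<mu> \<equiv> lap_eig (N - 1) (j - 1)"
  shows "gsfem_eig N (1/12) (1/360) j
    = gsfem_num (1/12) \<mu> / gsfem_den (1/360) \<mu> / (mesh_h N)\<^sup>2"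
proof -
  define n h where "n = N - 1" and "h = mesh_h N"
  define F where "F c = gsfem_num (1/12) (lap_eig n c) / gsfem_den (1/360) (lap_eig n c) / h\<^sup>2" for c
  have carriers: "stiff_mat N - (1/12) \<cdot>\<^sub>m jump_mat N \<in> carrier_mat n n"
    "mass_mat N + (1/360) \<cdot>\<^sub>m jump_mat_g N \<in> carrier_mat n n"
    by (auto simp: n_def stiff_mat_def mass_mat_def jump_mat_def jump_mat_g_def)
  have "0 < h"
    using assms by (simp add: h_def mesh_h_def)
  have den: "0 < gsfem_den (1/360) (lap_eig n c)" for c
    by (intro gsfem_den_pos lap_eig_bounds)
  have ratio: "gsfem_num (1/12) (lap_eig n c) / h / (h * gsfem_den (1/360) (lap_eig n c)) = F c" for c
    by (simp add: F_def power2_eq_square)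
  have "F c < F d" if "c < d" "d < n" for c d
    unfolding F_def using that lap_eig_bounds[of n] lap_eig_strict_mono[of c d n] \<open>0 < h\<close>
    by (intro divide_strict_right_mono gsfem_ratio_strict_mono) auto
  then have "sorted (map F [0..<n])"
    by (auto simp: sorted_iff_nth_mono intro: less_imp_le dest: le_neq_implies_less)
  then have "sorted (map (\<lambda>c. gsfem_num (1/12) (lap_eig n c) / h / (h * gsfem_den (1/360) (lap_eig n c))) [0..<n])"
    unfolding ratio .
  moreover have "h * gsfem_den (1/360) (lap_eig n c) \<noteq> 0" for c
    using den[of c] \<open>0 < h\<close> by simp
  ultimately have "gen_eig (stiff_mat N - (1/12) \<cdot>\<^sub>m jump_mat N) (mass_mat N + (1/360) \<cdot>\<^sub>m jump_mat_g N) j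
      = gsfem_num (1/12) (lap_eig n (j - 1)) / h / (h * gsfem_den (1/360) (lap_eig n (j - 1)))"
    using assms(2,3) unfolding n_def
    by (intro gen_eig_diagonalized[OF carriers[unfolded n_def] sine_mat_carrier det_sine_mat_nonzero
          gsfem_pencil_diagonalized[of N, folded h_def]]) auto
  then show ?thesis
    unfolding gsfem_eig_def ratio by (simp add: F_def \<mu>_def n_def h_def)
qed

section \<open>Accuracy of the eigenvalue ratio\<close>

lemma gsfem_gap_mono:
  assumes "0 \<le> s" "a \<le> b" "a + b \<le> 12"
  shows "gsfem_num (1/12) a - s * gsfem_den (1/360) a \<le> gsfem_num (1/12) b - s * gsfem_den (1/360) b"
proof -
  have "(gsfem_num (1/12) b - s * gsfem_den (1/360) b) - (gsfem_num (1/12) a - s * gsfem_den (1/360) a)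
      = (b - a) * ((1 + s / 6) - (1/12 + s / 360) * (a + b))"
    by (simp add: gsfem_num_def gsfem_den_def power2_eq_square field_simps)
  moreover have "(1/12 + s / 360) * (a + b) \<le> (1/12 + s / 360) * 12"
    using assms by (intro mult_left_mono) auto
  then have "0 \<le> (1 + s / 6) - (1/12 + s / 360) * (a + b)"
    using assms by simp
  ultimately show ?thesis
    using assms by (metis diff_ge_0_iff_ge mult_nonneg_nonneg)
qed

text \<open>Interval arithmetic on Horner's scheme over \<open>[a, b]\<close> with \<open>0 \<le> a\<close>: a lower bound for
  \<open>x * p x\<close> only needs a lower bound for \<open>p x\<close>.\<close>
fun horner_lower_bound :: "real list \<Rightarrow> real \<Rightarrow> real \<Rightarrow> real" where
  "horner_lower_bound [] a b = 0"
| "horner_lower_bound (c # cs) a b =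
     (let l = horner_lower_bound cs a b in c + (if 0 \<le> l then a * l else b * l))"

lemma horner_lower_bound_le:
  assumes "0 \<le> a" "a \<le> x" "x \<le> b"
  shows "horner_lower_bound cs a b \<le> poly (Poly cs) x"
proof (induction cs)
  case (Cons c cs)
  define l where "l = horner_lower_bound cs a b"
  have "(if 0 \<le> l then a * l else b * l) \<le> x * poly (Poly cs) x"
  proof (cases "0 \<le> l")
    case True
    then show ?thesis
      using Cons assms by (simp add: l_def mult_mono)
  next
    case False
    then have "b * l \<le> x * l"
      using assms by (simp add: mult_right_mono_neg)
    also have "\<dots> \<le> x * poly (Poly cs) x"
      using Cons assms by (simp add: l_def mult_left_mono)
    finally show ?thesis
      using False by simp
  qed
  then show ?case
    by (simp add: Let_def flip: l_def)
qed simp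

lemma poly_pos_if_shifted_lower_bound_pos:
  assumes "0 < horner_lower_bound (coeffs (p \<circ>\<^sub>p [:a, 1:])) 0 w" and "a \<le> x" "x \<le> a + w"
  shows "0 < poly p x"
proof -
  have "horner_lower_bound (coeffs (p \<circ>\<^sub>p [:a, 1:])) 0 w \<le> poly (p \<circ>\<^sub>p [:a, 1:]) (x - a)"
    using horner_lower_bound_le[of 0 "x - a" w "coeffs (p \<circ>\<^sub>p [:a, 1:])"] assms(2,3) by simp
  then show ?thesis
    using assms(1) by (simp add: poly_pcompose)
qed

definition mu_lower_poly :: "real poly" where
  "mu_lower_poly = [:0, 1, -1/12, 1/360, -1/20160, 1/1814400, -1/239500800:]"

definition mu_upper_poly :: "real poly" where
  "mu_upper_poly = [:0, 1, -1/12, 1/360, -1/20160, 1/1814400, 1/239500800:]"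

text \<open>Maclaurin polynomial of \<open>2 - 2 * cos t\<close> of degree 10, written in \<open>t\<^sup>2\<close>; the last
  coefficient \<open>\<plusminus>1/239500800 = \<plusminus>2 / fact 12\<close> is the remainder bound.\<close>
lemma mu_poly_bounds:
  fixes t :: real
  shows "poly mu_lower_poly (t\<^sup>2) \<le> 2 - 2 * cos t" and "2 - 2 * cos t \<le> poly mu_upper_poly (t\<^sup>2)"
proof -
  obtain s where s: "cos t = (\<Sum>m<12. cos_coeff m * t ^ m) + cos (s + 1/2 * real 12 * pi) / fact 12 * t ^ 12"
    using Maclaurin_cos_expansion[of t 12] by blast
  define r where "r = cos (s + 1/2 * real 12 * pi) / fact 12 * t ^ 12"
  have cos_eq: "cos t = (\<Sum>m<12. cos_coeff m * t ^ m) + r"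
    using s by (simp add: r_def)
  have r: "\<bar>r\<bar> \<le> t ^ 12 / 479001600"
    using abs_cos_le_one[of "s + 1/2 * real 12 * pi"]
    by (simp add: r_def abs_mult power_abs fact_numeral divide_right_mono mult_left_le_one_le)
  have taylor: "(\<Sum>m<12. cos_coeff m * t ^ m)
      = 1 - t^2/2 + t^4/24 - t^6/720 + t^8/40320 - t^10/3628800"
    by (simp add: lessThan_nat_numeral cos_coeff_def fact_numeral)
  have "poly mu_lower_poly (t\<^sup>2) = 2 - 2 * (\<Sum>m<12. cos_coeff m * t ^ m) - 2 * (t ^ 12 / 479001600)"
    and "poly mu_upper_poly (t\<^sup>2) = 2 - 2 * (\<Sum>m<12. cos_coeff m * t ^ m) + 2 * (t ^ 12 / 479001600)"
    unfolding taylor by (simp_all add: mu_lower_poly_def mu_upper_poly_def field_simps eval_nat_numeral)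
  then show "poly mu_lower_poly (t\<^sup>2) \<le> 2 - 2 * cos t" and "2 - 2 * cos t \<le> poly mu_upper_poly (t\<^sup>2)"
    using cos_eq abs_le_D1[OF r] abs_le_D2[OF r] by linarith+
qed

text \<open>At \<open>\<mu> = 2 - 2 * cos t\<close> the ratio \<open>gsfem_num (1/12) \<mu> / gsfem_den (1/360) \<mu>\<close> equals
  \<open>t\<^sup>2 - t ^ 8 / 6048 + O(t ^ 10)\<close>, hence the constant term \<open>1/6048\<close> of both gap polynomials: the
  constant \<open>1/3024\<close> of the theorem leaves a factor 2 of slack, enough for positivity on \<open>[0, 10]\<close>.\<close>
definition lower_gap_poly :: "real poly" where
  "lower_gap_poly = [:1/6048, -23/453600, 229/39916800, -211/653184000, 11863/804722688000,
     -3671/6584094720000, 1747/108637562880000, -137/395045683200000,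
     45961/8030488648089600000, -3449/48182931888537600000, 13/19711199408947200000,
     -1/236534392907366400000, 1/62445079727544729600000:]"

definition upper_gap_poly :: "real poly" where
  "upper_gap_poly = [:1/6048, -1/226800, -1/4276800, 11/653184000, -479/804722688000,
     71/6584094720000, -1/10346434560000, 1/13036507545600000, 1/70237510041600000,
     1/20649827952230400000:]"

lemma lower_gap_identity:
  "gsfem_num (1/12) (poly mu_lower_poly x) - (x - x ^ 4 / 3024) * gsfem_den (1/360) (poly mu_lower_poly x)
     = x ^ 4 * poly lower_gap_poly x"
proof -
  have "mu_lower_poly - smult (1/12) (mu_lower_poly * mu_lower_poly)
      - [:0, 1, 0, 0, -1/3024:]
        * ([:1:] - smult (1/6) mu_lower_poly + smult (1/360) (mu_lower_poly * mu_lower_poly))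
      = [:0, 0, 0, 0, 1:] * lower_gap_poly"
    by (simp add: mu_lower_poly_def lower_gap_poly_def)
  from arg_cong[OF this, of "\<lambda>p. poly p x"] show ?thesis
    by (simp add: gsfem_num_def gsfem_den_def power2_eq_square eval_nat_numeral field_simps)
qed

lemma upper_gap_identity:
  "x * gsfem_den (1/360) (poly mu_upper_poly x) - gsfem_num (1/12) (poly mu_upper_poly x)
     = x ^ 4 * poly upper_gap_poly x"
proof -
  have "[:0, 1:] * ([:1:] - smult (1/6) mu_upper_poly + smult (1/360) (mu_upper_poly * mu_upper_poly))
      - (mu_upper_poly - smult (1/12) (mu_upper_poly * mu_upper_poly))
      = [:0, 0, 0, 0, 1:] * upper_gap_poly"
    by (simp add: mu_upper_poly_def upper_gap_poly_def)
  from arg_cong[OF this, of "\<lambda>p. poly p x"] show ?thesis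
    by (simp add: gsfem_num_def gsfem_den_def power2_eq_square eval_nat_numeral field_simps)
qed

lemma lower_gap_poly_pos:
  assumes "0 \<le> x" "x \<le> 10"
  shows "0 < poly lower_gap_poly x"
proof -
  have "0 < horner_lower_bound (coeffs (lower_gap_poly \<circ>\<^sub>p [:0, 1:])) 0 (5/2)"
    and "0 < horner_lower_bound (coeffs (lower_gap_poly \<circ>\<^sub>p [:5/2, 1:])) 0 (5/2)"
    and "0 < horner_lower_bound (coeffs (lower_gap_poly \<circ>\<^sub>p [:5, 1:])) 0 (5/4)"
    and "0 < horner_lower_bound (coeffs (lower_gap_poly \<circ>\<^sub>p [:25/4, 1:])) 0 (5/4)"
    and "0 < horner_lower_bound (coeffs (lower_gap_poly \<circ>\<^sub>p [:15/2, 1:])) 0 (5/2)"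
    by (simp_all add: lower_gap_poly_def pcompose_pCons Let_def)
  from this[THEN poly_pos_if_shifted_lower_bound_pos, of x] show ?thesis
    using assms by linarith
qed

lemma upper_gap_poly_pos:
  assumes "0 \<le> x" "x \<le> 10"
  shows "0 < poly upper_gap_poly x"
proof -
  have "0 < horner_lower_bound (coeffs (upper_gap_poly \<circ>\<^sub>p [:0, 1:])) 0 10"
    by (simp add: upper_gap_poly_def pcompose_pCons Let_def)
  from poly_pos_if_shifted_lower_bound_pos[OF this, of x] show ?thesis
    using assms by simp
qed

text \<open>Since the denominator is positive, comparing the ratio with \<open>s\<close> amounts to the sign of
  \<open>gsfem_num (1/12) \<mu> - s * gsfem_den (1/360) \<mu>\<close>, which is monotone in \<open>\<mu>\<close>; at the polynomial
  bounds for \<open>\<mu> = 2 - 2 * cos t\<close> this sign is given by the gap identities.\<close>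
lemma gsfem_ratio_lower_bound:
  fixes t :: real
  assumes "0 < t" and "t\<^sup>2 \<le> 10"
  defines "\<mu> \<equiv> 2 - 2 * cos t"
  shows "t\<^sup>2 - t ^ 8 / 3024 < gsfem_num (1/12) \<mu> / gsfem_den (1/360) \<mu>"
proof -
  define x l where "x = t\<^sup>2" and "l = poly mu_lower_poly x"
  have x: "0 < x" "x \<le> 10"
    using assms by (simp_all add: x_def)
  have "l \<le> \<mu>"
    using mu_poly_bounds(1)[of t] by (simp add: l_def x_def \<mu>_def)
  have "0 \<le> \<mu>" "\<mu> \<le> 4"
    unfolding \<mu>_def using cos_le_one[of t] cos_ge_minus_one[of t] by linarith+
  have "x ^ 3 \<le> 10 ^ 3"
    using x by (intro power_mono) auto
  then have "x * x ^ 3 \<le> x * 3024"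
    using x by (intro mult_left_mono) auto
  then have "0 \<le> x - x ^ 4 / 3024"
    by (simp add: power_Suc[symmetric] del: power_Suc)
  have "0 < x ^ 4 * poly lower_gap_poly x"
    using x lower_gap_poly_pos[of x] by simp
  also have "\<dots> = gsfem_num (1/12) l - (x - x ^ 4 / 3024) * gsfem_den (1/360) l"
    by (simp add: l_def lower_gap_identity)
  also have "\<dots> \<le> gsfem_num (1/12) \<mu> - (x - x ^ 4 / 3024) * gsfem_den (1/360) \<mu>"
    using \<open>0 \<le> x - x ^ 4 / 3024\<close> \<open>l \<le> \<mu>\<close> \<open>\<mu> \<le> 4\<close> by (intro gsfem_gap_mono) auto
  finally have "x - x ^ 4 / 3024 < gsfem_num (1/12) \<mu> / gsfem_den (1/360) \<mu>"
    using gsfem_den_pos[OF \<open>0 \<le> \<mu>\<close> \<open>\<mu> \<le> 4\<close>] by (simp add: less_divide_eq)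
  moreover have "t ^ 8 = x ^ 4"
    by (simp add: x_def flip: power_mult)
  ultimately show ?thesis
    unfolding x_def[symmetric] by simp
qed

lemma gsfem_ratio_upper_bound:
  fixes t :: real
  assumes "0 < t" and "t\<^sup>2 \<le> 10"
  defines "\<mu> \<equiv> 2 - 2 * cos t"
  shows "gsfem_num (1/12) \<mu> / gsfem_den (1/360) \<mu> < t\<^sup>2"
proof -
  define x l u where "x = t\<^sup>2" and "l = poly mu_lower_poly x" and "u = poly mu_upper_poly x"
  have x: "0 < x" "x \<le> 10"
    using assms by (simp_all add: x_def)
  have "l \<le> \<mu>" "\<mu> \<le> u"
    using mu_poly_bounds[of t] by (simp_all add: l_def u_def x_def \<mu>_def)
  moreover have "0 \<le> \<mu>" "\<mu> \<le> 4"
    unfolding \<mu>_def using cos_le_one[of t] cos_ge_minus_one[of t] by linarith+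
  moreover have "u - l = x ^ 6 / 119750400"
    by (simp add: l_def u_def mu_lower_poly_def mu_upper_poly_def field_simps eval_nat_numeral)
  moreover have "x ^ 6 \<le> 1000000"
    using power_mono[of x 10 6] x by simp
  ultimately have "\<mu> + u \<le> 12"
    by linarith
  have "gsfem_num (1/12) \<mu> - x * gsfem_den (1/360) \<mu> \<le> gsfem_num (1/12) u - x * gsfem_den (1/360) u"
    using x \<open>\<mu> \<le> u\<close> \<open>\<mu> + u \<le> 12\<close> by (intro gsfem_gap_mono) auto
  also have "\<dots> = - (x ^ 4 * poly upper_gap_poly x)"
    using upper_gap_identity[of x] by (simp add: u_def)
  also have "\<dots> < 0"
    using x upper_gap_poly_pos[of x] by simp
  finally show ?thesis
    unfolding x_def[symmetric] using gsfem_den_pos[OF \<open>0 \<le> \<mu>\<close> \<open>\<mu> \<le> 4\<close>]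
    by (simp add: divide_less_eq)
qed

lemma gsfem_relative_error:
  fixes t h :: real
  assumes "0 < t" and "t\<^sup>2 \<le> 10" and "0 < h"
  defines "F \<equiv> gsfem_num (1/12) (2 - 2 * cos t) / gsfem_den (1/360) (2 - 2 * cos t)"
  shows "\<bar>F / h\<^sup>2 - (t / h)\<^sup>2\<bar> / (t / h)\<^sup>2 < 1 / 3024 * t ^ 6"
proof -
  have bounds: "t\<^sup>2 - t ^ 8 / 3024 < F" "F < t\<^sup>2"
    using gsfem_ratio_lower_bound[OF assms(1,2)] gsfem_ratio_upper_bound[OF assms(1,2)]
    by (simp_all add: F_def)
  have "\<bar>F / h\<^sup>2 - (t / h)\<^sup>2\<bar> / (t / h)\<^sup>2 = (t\<^sup>2 - F) / t\<^sup>2"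
    using \<open>0 < h\<close> bounds by (simp add: power_divide diff_divide_distrib[symmetric])
  also have "\<dots> < (t ^ 8 / 3024) / t\<^sup>2"
    using bounds \<open>0 < t\<close> by (intro divide_strict_right_mono) auto
  also have "\<dots> = 1 / 3024 * t ^ 6"
    using \<open>0 < t\<close> by (simp add: field_simps eval_nat_numeral)
  finally show ?thesis .
qed

lemma pi_squared_le_10: "pi\<^sup>2 \<le> 10"
proof -
  have "2 < poly mu_lower_poly ((158/100)\<^sup>2)"
    by (simp add: mu_lower_poly_def power2_eq_square)
  then have "cos (158/100 :: real) < 0"
    using mu_poly_bounds(1)[of "158/100"] by linarith
  then have "pi / 2 < 158/100"
    using cos_ge_zero[of "158/100"] by (cases "158/100 \<le> pi / 2") auto
  then have "pi * pi \<le> (316/100) * (316/100)"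
    by (intro mult_mono) auto
  then show ?thesis
    by (simp add: power2_eq_square)
qed

theorem theorem1:
  fixes N :: nat
  assumes "N \<ge> 2"
  shows "\<forall>j \<in> {1..N - 1}.
    \<bar>gsfem_eig N (1/12) (1/360) j - (real j)\<^sup>2 * pi\<^sup>2\<bar> / ((real j)\<^sup>2 * pi\<^sup>2)
      < (1 / 3024) * (real j * pi * mesh_h N) ^ 6"
proof
  fix j assume j: "j \<in> {1..N - 1}"
  define h t where "h = mesh_h N" and "t = real j * pi * h"
  have "0 < h"
    using assms by (simp add: h_def mesh_h_def)
  have angle: "sine_angle (N - 1) (j - 1) = t"
    using assms j by (simp add: sine_angle_def t_def h_def mesh_h_def)
  then have "0 < t" and "t < pi"
    using sine_angle_pos[of "N - 1" "j - 1"] sine_angle_less_pi[of "j - 1" "N - 1"] j by auto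
  then have "t\<^sup>2 \<le> 10"
    using pi_squared_le_10 power_mono[of t pi 2] by linarith
  have "gsfem_eig N (1/12) (1/360) j
      = gsfem_num (1/12) (2 - 2 * cos t) / gsfem_den (1/360) (2 - 2 * cos t) / h\<^sup>2"
    using gsfem_eig_eq[OF assms, of j] j angle by (simp add: lap_eig_def h_def)
  moreover have "(real j)\<^sup>2 * pi\<^sup>2 = (t / h)\<^sup>2"
    using \<open>0 < h\<close> by (simp add: t_def power_mult_distrib power_divide)
  ultimately show "\<bar>gsfem_eig N (1/12) (1/360) j - (real j)\<^sup>2 * pi\<^sup>2\<bar> / ((real j)\<^sup>2 * pi\<^sup>2)
      < (1 / 3024) * (real j * pi * mesh_h N) ^ 6"
    using gsfem_relative_error[OF \<open>0 < t\<close> \<open>t\<^sup>2 \<le> 10\<close> \<open>0 < h\<close>] by (simp add: t_def h_def)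
qed

end
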